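(* Let $\mathbf a=(a_1,\dots,a_n)$ be a sequence of integers with $a_1+\cdots+a_n=1$, viewed as a lattice path $p$ with steps $(1,a_1),\dots,(1,a_n)$ from $(0,0)$ to $(n,1)$, with vertices $P_0,\dots,P_n$. Let $T\subseteq\{0,1,\dots,n-1\}$ be a set of $k\ge 1$ indices (the positions of the special vertices of $p$; the last vertex $P_n$ is not special). For $t\in T$, the conjugate $\sigma^t(p)$ has as special vertices its vertices in positions $m\in\{0,\dots,n-1\}$ with $(t+m)\bmod n\in T$ (so special vertices are carried along by cyclic shifting), and in particular $\sigma^t(p)$ starts with a special vertex. Let $X(\sigma^t(p))$ be the number of special vertices of $\sigma^t(p)$ lying on or below the $x$-axis, i.e. the number of $m\in\{0,\dots,n-1\}$ with $(t+m)\bmod n\in T$ and $a_{t+1}+a_{t+2}+\cdots+a_{t+m}\le 0$ (indices of $a$ taken modulo $n$). Then $$\{X(\sigma^{t}(p)) : t\in T\}=\{1,2,\dots,k\}.$$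
   Context: The conjugate $\sigma^t(p)$ is the path with step sequence $(a_{t+1},\dots,a_n,a_1,\dots,a_t)$ starting at the origin; its vertex in position $m$ corresponds to vertex $P_{t+m \bmod n}$ of $p$. *)

theory Defs
  imports Main
begin

text \<open>Steps a_1..a_n are given as a function a on indices 1..n; index j of the
  cyclic sequence is read modulo n (representatives 1..n).\<close>

definition cyc_step :: "(nat \<Rightarrow> int) \<Rightarrow> nat \<Rightarrow> nat \<Rightarrow> int" where
  "cyc_step a n j = a (((j - 1) mod n) + 1)"

definition conj_height :: "(nat \<Rightarrow> int) \<Rightarrow> nat \<Rightarrow> nat \<Rightarrow> nat \<Rightarrow> int" where
  "conj_height a n t m = (\<Sum>i = 1..m. cyc_step a n (t + i))"

definition X_count :: "(nat \<Rightarrow> int) \<Rightarrow> nat \<Rightarrow> nat set \<Rightarrow> nat \<Rightarrow> nat" where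
  "X_count a n T t = card {m. m < n \<and> (t + m) mod n \<in> T \<and> conj_height a n t m \<le> 0}"

end

theory Submission
  imports Defs "HOL-Library.Product_Lexorder"
begin

text \<open>Write \<open>H j\<close> for the height of the vertex \<open>P\<^sub>j\<close> of the path extended periodically, so that
  \<open>H (j + n) = H j + 1\<close>. The vertex of \<open>\<sigma>\<^sup>t(p)\<close> in position \<open>m\<close> corresponds to \<open>s = (t + m) mod n\<close>
  and lies at height \<open>H s - H t\<close> if \<open>t \<le> s\<close> and \<open>H s + 1 - H t\<close> if \<open>s < t\<close>. Hence it lies
  on or below the axis iff \<open>(H s, -s) \<le> (H t, -t)\<close> lexicographically, and \<open>X(\<sigma>\<^sup>t(p))\<close> is the
  rank of \<open>t\<close> in \<open>T\<close> for this strict total order; the ranks of the \<open>k\<close> elements of \<open>T\<close>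
  are exactly \<open>1, \<dots>, k\<close>.\<close>

lemma card_le_rank_image:
  fixes f :: "'a \<Rightarrow> 'b::linorder"
  assumes fin: "finite T" and inj: "inj_on f T"
  shows "(\<lambda>t. card {s\<in>T. f s \<le> f t}) ` T = {1..card T}"
proof -
  define r where "r t = card {s\<in>T. f s \<le> f t}" for t
  have r_range: "r t \<in> {1..card T}" if "t \<in> T" for t
  proof -
    have "card {s\<in>T. f s \<le> f t} > 0"
      using that fin by (subst card_gt_0_iff) auto
    moreover have "card {s\<in>T. f s \<le> f t} \<le> card T"
      using fin by (intro card_mono) auto
    ultimately show ?thesis by (simp add: r_def)
  qed
  have r_strict_mono: "r s < r t" if "s \<in> T" "t \<in> T" "f s < f t" for s t
  proof -
    have "{s'\<in>T. f s' \<le> f s} \<subset> {s'\<in>T. f s' \<le> f t}"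
      using that by force
    then show ?thesis unfolding r_def using fin by (intro psubset_card_mono) auto
  qed
  have "inj_on r T"
  proof (rule inj_onI)
    fix s t assume st: "s \<in> T" "t \<in> T" "r s = r t"
    show "s = t"
    proof (rule ccontr)
      assume "s \<noteq> t"
      then have "f s \<noteq> f t" using inj st by (auto dest: inj_onD)
      then have "f s < f t \<or> f t < f s" by auto
      then show False using r_strict_mono[of s t] r_strict_mono[of t s] st by auto
    qed
  qed
  then have "card (r ` T) = card T" by (simp add: card_image)
  moreover have "r ` T \<subseteq> {1..card T}" using r_range by auto
  ultimately show ?thesis
    unfolding r_def[symmetric] by (intro card_subset_eq) auto
qed

lemma card_rotate:
  fixes n t :: nat
  shows "card {m. m < n \<and> P ((t + m) mod n)} = card {s. s < n \<and> P s}"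
proof (cases "n = 0")
  case False
  define g where "g m = (t + m) mod n" for m
  have inj: "inj_on g {..<n}"
  proof (rule inj_onI)
    fix m1 m2 assume "m1 \<in> {..<n}" "m2 \<in> {..<n}" "g m1 = g m2"
    then obtain q1 q2 where "t + m1 + n * q1 = t + m2 + n * q2"
      by (auto simp: g_def nat_mod_eq_iff)
    then have "(m1 + n * q1) mod n = (m2 + n * q2) mod n" by simp
    with \<open>m1 \<in> {..<n}\<close> \<open>m2 \<in> {..<n}\<close> show "m1 = m2" by simp
  qed
  have "g ` {..<n} \<subseteq> {..<n}" using False by (auto simp: g_def)
  then have onto: "g ` {..<n} = {..<n}"
    by (intro card_subset_eq) (simp_all add: card_image[OF inj])
  have "{m. m < n \<and> P (g m)} = {..<n} \<inter> g -` {s. P s}" by auto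
  then have "g ` {m. m < n \<and> P (g m)} = g ` {..<n} \<inter> {s. P s}" by auto
  also have "\<dots> = {s. s < n \<and> P s}" using onto by auto
  finally have "g ` {m. m < n \<and> P (g m)} = {s. s < n \<and> P s}" .
  moreover have "inj_on g {m. m < n \<and> P (g m)}"
    using inj by (rule inj_on_subset) auto
  ultimately show ?thesis
    unfolding g_def[symmetric] by (metis card_image)
qed simp

definition prefix_height :: "(nat \<Rightarrow> int) \<Rightarrow> nat \<Rightarrow> nat \<Rightarrow> int" where
  "prefix_height a n j = (\<Sum>i = 1..j. cyc_step a n i)"

lemma prefix_height_Suc:
  "prefix_height a n (Suc j) = prefix_height a n j + cyc_step a n (Suc j)"
  by (simp add: prefix_height_def)

lemma prefix_height_add:
  "prefix_height a n (t + m) = prefix_height a n t + conj_height a n t m"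
  by (induction m) (simp_all add: conj_height_def prefix_height_Suc)

lemma cyc_step_add_period:
  assumes "i \<ge> 1"
  shows "cyc_step a n (i + n) = cyc_step a n i"
proof -
  have "i + n - 1 = (i - 1) + n" using assms by simp
  then show ?thesis by (simp add: cyc_step_def)
qed

lemma prefix_height_period:
  assumes "(\<Sum>i = 1..n. a i) = 1"
  shows "prefix_height a n (j + n) = prefix_height a n j + 1"
proof (induction j)
  case 0
  have "prefix_height a n n = (\<Sum>i = 1..n. a i)"
    unfolding prefix_height_def cyc_step_def
    by (intro sum.cong) (auto simp: Suc_le_eq)
  then show ?case using assms by (simp add: prefix_height_def)
next
  case (Suc j)
  then show ?case
    using prefix_height_Suc[of a n "j + n"] prefix_height_Suc[of a n j]
      cyc_step_add_period[of "Suc j" a n] by simp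
qed

definition vertex_key :: "(nat \<Rightarrow> int) \<Rightarrow> nat \<Rightarrow> nat \<Rightarrow> int \<times> int" where
  "vertex_key a n s = (prefix_height a n s, - int s)"

lemma inj_vertex_key: "inj (vertex_key a n)"
  by (rule injI) (simp add: vertex_key_def)

lemma vertex_key_le_iff:
  "vertex_key a n s \<le> vertex_key a n t \<longleftrightarrow>
    prefix_height a n s < prefix_height a n t \<or>
    prefix_height a n s = prefix_height a n t \<and> t \<le> s"
  by (auto simp: vertex_key_def less_eq_prod_def)

lemma conj_height_nonpos_iff:
  assumes sum1: "(\<Sum>i = 1..n. a i) = 1" and "t < n" "m < n"
  shows "conj_height a n t m \<le> 0 \<longleftrightarrow>
    vertex_key a n ((t + m) mod n) \<le> vertex_key a n t"
proof -
  define H where "H = prefix_height a n"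
  define s where "s = (t + m) mod n"
  have height: "conj_height a n t m = H (t + m) - H t"
    using prefix_height_add[of a n t m] by (simp add: H_def)
  have "conj_height a n t m \<le> 0 \<longleftrightarrow> H s < H t \<or> H s = H t \<and> t \<le> s"
  proof (cases "t + m < n")
    case True
    then have "t + m = s" "t \<le> s" by (simp_all add: s_def)
    then show ?thesis using height by auto
  next
    case False
    then have "t + m = s + n" "s < t" using assms by (auto simp: s_def mod_if)
    then have "conj_height a n t m = H s + 1 - H t"
      using height prefix_height_period[OF sum1, of s] by (simp add: H_def)
    then show ?thesis using \<open>s < t\<close> by auto
  qed
  then show ?thesis by (simp add: vertex_key_le_iff H_def s_def)
qed

lemma X_count_eq_rank:
  assumes sum1: "(\<Sum>i = 1..n. a i) = 1" and T_sub: "T \<subseteq> {0..<n}" and "t \<in> T"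
  shows "X_count a n T t = card {s\<in>T. vertex_key a n s \<le> vertex_key a n t}"
proof -
  have "t < n" using assms by auto
  then have "{m. m < n \<and> (t + m) mod n \<in> T \<and> conj_height a n t m \<le> 0}
      = {m. m < n \<and> (t + m) mod n \<in> T
      \<and> vertex_key a n ((t + m) mod n) \<le> vertex_key a n t}"
    using conj_height_nonpos_iff[OF sum1] by (intro Collect_cong) blast
  then have "X_count a n T t = card {m. m < n \<and> (t + m) mod n \<in> T
      \<and> vertex_key a n ((t + m) mod n) \<le> vertex_key a n t}"
    by (simp add: X_count_def)
  also have "\<dots> = card {s. s < n \<and> s \<in> T \<and> vertex_key a n s \<le> vertex_key a n t}"
    by (rule card_rotate)
  also have "{s. s < n \<and> s \<in> T \<and> vertex_key a n s \<le> vertex_key a n t}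
      = {s\<in>T. vertex_key a n s \<le> vertex_key a n t}"
    using T_sub by auto
  finally show ?thesis .
qed

theorem theorem4:
  fixes a :: "nat \<Rightarrow> int" and n k :: nat and T :: "nat set"
  assumes sum1: "(\<Sum>i = 1..n. a i) = 1"
    and T_sub: "T \<subseteq> {0..<n}"
    and card_T: "card T = k"
    and k_pos: "k \<ge> 1"
  shows "(\<lambda>t. X_count a n T t) ` T = {1..k}"
proof -
  have "finite T" using T_sub finite_subset by blast
  have "(\<lambda>t. X_count a n T t) ` T
      = (\<lambda>t. card {s\<in>T. vertex_key a n s \<le> vertex_key a n t}) ` T"
    using X_count_eq_rank[OF sum1 T_sub] by (intro image_cong) auto
  also have "\<dots> = {1..card T}"
    by (rule card_le_rank_image[OF \<open>finite T\<close> inj_on_subset[OF inj_vertex_key subset_UNIV]])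
  finally show ?thesis using card_T by simp
qed

end
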